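(* Let $k$ be any field, let $d_1,\ldots,d_n$ be positive integers, let $A=k[x_1, \ldots, x_n]/(x_1^{d_1}, \ldots, x_n^{d_n})$ and $t = \sum_{i=1}^n (d_i - 1)$. If $m\ge 0$ is an integer with $\max(d_1, \ldots, d_n)>(t+m)/2$, then for all integers $0\le i \le (t-m)/2$ the map $A_i \to A_{i+m}$ given by $f \mapsto f \cdot (x_1+ \dots + x_n)^m$ is injective.
   Context: $A$ is graded by degree, $A=\bigoplus_{i\ge 0}A_i$, with $A_i$ the image of the homogeneous polynomials of degree $i$. *)

theory Defs
  imports Main "HOL-Library.Poly_Mapping"
begin

(* Multivariate polynomials over 'k: finitely supported maps from monomials
 (exponent vectors, nat \<Rightarrow>\<^sub>0 nat, variable j has index j) to coefficients. *)
type_synonym 'k mpoly = "(nat \<Rightarrow>\<^sub>0 nat) \<Rightarrow>\<^sub>0 'k"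

(* The variable x_j (variables are indexed 0..n-1). *)
definition var :: "nat \<Rightarrow> 'k::comm_ring_1 mpoly" where
  "var j = Poly_Mapping.single (Poly_Mapping.single j 1) 1"

definition mdeg :: "(nat \<Rightarrow>\<^sub>0 nat) \<Rightarrow> nat" where
  "mdeg a = (\<Sum>j\<in>Poly_Mapping.keys a. Poly_Mapping.lookup a j)"

definition in_poly_ring :: "nat \<Rightarrow> 'k::comm_ring_1 mpoly \<Rightarrow> bool" where
  "in_poly_ring n f \<longleftrightarrow> (\<forall>a\<in>Poly_Mapping.keys f. Poly_Mapping.keys a \<subseteq> {..<n})"

definition homogeneous :: "nat \<Rightarrow> 'k::comm_ring_1 mpoly \<Rightarrow> bool" where
  "homogeneous i f \<longleftrightarrow> (\<forall>a\<in>Poly_Mapping.keys f. mdeg a = i)"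

definition in_mci_ideal :: "nat \<Rightarrow> (nat \<Rightarrow> nat) \<Rightarrow> 'k::comm_ring_1 mpoly \<Rightarrow> bool" where
  "in_mci_ideal n d f \<longleftrightarrow>
     (\<exists>g. (\<forall>j<n. in_poly_ring n (g j)) \<and> f = (\<Sum>j<n. g j * var j ^ d j))"

end

theory Submission
  imports Defs
begin

text \<open>The monomials \<open>x^a\<close> with \<open>a\<^sub>j < d\<^sub>j\<close> for all \<open>j\<close> span a complement of the
  ideal \<open>(x\<^sub>1^d\<^sub>1, \<dots>, x\<^sub>n^d\<^sub>n)\<close>, so a polynomial lies in the ideal iff it has no such
  standard monomial in its support. Let \<open>x\<^sub>p\<close> be a variable of maximal \<open>d\<^sub>p\<close>. If \<open>f\<close> of degree \<open>i\<close>
  is not in the ideal, take a standard monomial \<open>x^a\<close> of \<open>f\<close> whose exponent of \<open>x\<^sub>p\<close> is maximal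
  among the standard monomials of \<open>f\<close>. In \<open>f \<cdot> (x\<^sub>1 + \<dots> + x\<^sub>n)\<close> the monomial \<open>x\<^sub>p x^a\<close> can
  only arise as \<open>x\<^sub>p \<cdot> x^a\<close>, so it survives with the same coefficient and again has
  maximal \<open>x\<^sub>p\<close>-exponent among the standard monomials, as long as it stays standard. Since
  \<open>a\<^sub>p + m \<le> i + m < d\<^sub>p\<close>, this can be repeated \<open>m\<close> times, so \<open>f \<cdot> (x\<^sub>1 + \<dots> + x\<^sub>n)^m\<close>
  has a standard monomial and is not in the ideal either.\<close>

lemma lookup_mult_single_one_add:
  fixes g :: "('a::cancel_comm_monoid_add) \<Rightarrow>\<^sub>0 'k::comm_ring_1"
  shows "Poly_Mapping.lookup (g * Poly_Mapping.single e 1) (b + e) = Poly_Mapping.lookup g b"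
proof -
  have single_factor: "(\<Sum>q. (Poly_Mapping.lookup (Poly_Mapping.single e (1::'k)) q when b + e = a + q))
      = (1 when a = b)" for a
  proof -
    have "(\<lambda>q. (Poly_Mapping.lookup (Poly_Mapping.single e (1::'k)) q when b + e = a + q))
        = (\<lambda>q. (1 when a = b) when q = e)"
      by (auto simp: lookup_single when_def fun_eq_iff)
    then show ?thesis by (simp only: Sum_any_when_equal)
  qed
  have "Poly_Mapping.lookup (g * Poly_Mapping.single e 1) (b + e)
      = (\<Sum>a. Poly_Mapping.lookup g a * (1 when a = b))"
    by (simp only: lookup_mult single_factor)
  also have "\<dots> = (\<Sum>a. Poly_Mapping.lookup g a when a = b)"
    by (simp add: mult_when)
  finally show ?thesis by simp
qed

lemma poly_mapping_sum_single_lookup: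
  "f = (\<Sum>a\<in>Poly_Mapping.keys f. Poly_Mapping.single a (Poly_Mapping.lookup f a))"
  by (rule poly_mapping_eqI) (simp add: lookup_sum lookup_single when_def in_keys_iff)

lemma var_power: "(var j :: 'k::comm_ring_1 mpoly) ^ e = Poly_Mapping.single (Poly_Mapping.single j e) 1"
proof (induction e)
  case (Suc e)
  have "(var j :: 'k mpoly) ^ Suc e = var j * Poly_Mapping.single (Poly_Mapping.single j e) 1"
    by (simp only: power_Suc Suc.IH)
  also have "\<dots> = Poly_Mapping.single (Poly_Mapping.single j 1 + Poly_Mapping.single j e) 1"
    by (simp add: var_def mult_single)
  finally show ?case by (simp add: single_add[symmetric])
qed simp

lemma keys_mult_var:
  fixes g :: "'k::comm_ring_1 mpoly"
  assumes "b \<in> Poly_Mapping.keys (g * var j)"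
  obtains b' where "b' \<in> Poly_Mapping.keys g" "b = b' + Poly_Mapping.single j 1"
  using assms keys_mult[of g "var j"] by (auto simp: var_def)

lemma keys_mult_sum_var:
  fixes g :: "'k::comm_ring_1 mpoly"
  assumes "b \<in> Poly_Mapping.keys (g * (\<Sum>j<n. var j))"
  obtains j b' where "j < n" "b' \<in> Poly_Mapping.keys g" "b = b' + Poly_Mapping.single j 1"
proof -
  have "b \<in> Poly_Mapping.keys (\<Sum>j<n. g * var j)"
    using assms by (simp add: sum_distrib_left)
  then obtain j where "j < n" "b \<in> Poly_Mapping.keys (g * var j)"
    using keys_sum[of "\<lambda>j. g * var j" "{..<n}"] by blast
  then show thesis using that keys_mult_var by metis
qed

lemma lookup_le_mdeg: "Poly_Mapping.lookup a j \<le> mdeg a"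
proof (cases "j \<in> Poly_Mapping.keys a")
  case True
  then show ?thesis unfolding mdeg_def by (intro member_le_sum) auto
qed (simp add: in_keys_iff)

definition standard_monomial :: "nat \<Rightarrow> (nat \<Rightarrow> nat) \<Rightarrow> (nat \<Rightarrow>\<^sub>0 nat) \<Rightarrow> bool" where
  "standard_monomial n d a \<longleftrightarrow> (\<forall>j<n. Poly_Mapping.lookup a j < d j)"

lemma standard_monomial_add_singleD:
  "standard_monomial n d (a + Poly_Mapping.single j k) \<Longrightarrow> standard_monomial n d a"
  unfolding standard_monomial_def by (auto simp: lookup_add)

lemma keys_mci_ideal_not_standard:
  fixes h :: "'k::comm_ring_1 mpoly"
  assumes "in_mci_ideal n d h" "a \<in> Poly_Mapping.keys h"
  shows "\<not> standard_monomial n d a"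
proof -
  obtain g where "h = (\<Sum>j<n. g j * var j ^ d j)"
    using assms(1) unfolding in_mci_ideal_def by blast
  then obtain j where j: "j < n" "a \<in> Poly_Mapping.keys (g j * var j ^ d j)"
    using assms(2) keys_sum[of "\<lambda>j. g j * var j ^ d j" "{..<n}"] by blast
  then obtain b c where "a = b + c" "c \<in> Poly_Mapping.keys ((var j :: 'k mpoly) ^ d j)"
    using keys_mult[of "g j" "var j ^ d j"] by blast
  then have "a = b + Poly_Mapping.single j (d j)"
    by (simp add: var_power split: if_splits)
  then have "d j \<le> Poly_Mapping.lookup a j" by (simp add: lookup_add)
  then show ?thesis using j(1) unfolding standard_monomial_def by force
qed

lemma single_diff_mult_var_power:
  assumes "d \<le> Poly_Mapping.lookup a j"
  shows "Poly_Mapping.single (a - Poly_Mapping.single j d) c * var j ^ d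
       = (Poly_Mapping.single a c :: 'k::comm_ring_1 mpoly)"
proof -
  have "a - Poly_Mapping.single j d + Poly_Mapping.single j d = a"
    using assms by (intro poly_mapping_eqI) (auto simp: lookup_add lookup_minus lookup_single when_def)
  then show ?thesis by (simp add: var_power mult_single)
qed

lemma in_mci_ideal_if_keys_not_standard:
  fixes f :: "'k::comm_ring_1 mpoly"
  assumes f: "in_poly_ring n f" and not_standard: "\<forall>a\<in>Poly_Mapping.keys f. \<not> standard_monomial n d a"
  shows "in_mci_ideal n d f"
proof -
  define J where "J a = (SOME j. j < n \<and> d j \<le> Poly_Mapping.lookup a j)" for a
  have J: "J a < n \<and> d (J a) \<le> Poly_Mapping.lookup a (J a)" if "a \<in> Poly_Mapping.keys f" for a
    unfolding J_def
    by (rule someI_ex) (use not_standard that in \<open>force simp: standard_monomial_def\<close>)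
  define K where "K j = {a\<in>Poly_Mapping.keys f. J a = j}" for j
  define g where "g j = (\<Sum>a\<in>K j. Poly_Mapping.single (a - Poly_Mapping.single j (d j))
      (Poly_Mapping.lookup f a))" for j
  have "in_poly_ring n (g j)" for j
    unfolding in_poly_ring_def
  proof
    fix b assume "b \<in> Poly_Mapping.keys (g j)"
    then obtain a where a: "a \<in> Poly_Mapping.keys f" "b = a - Poly_Mapping.single j (d j)"
      using keys_sum[of "\<lambda>a. Poly_Mapping.single (a - Poly_Mapping.single j (d j)) (Poly_Mapping.lookup f a)" "K j"]
      unfolding g_def K_def by (auto split: if_splits)
    then have "Poly_Mapping.keys b \<subseteq> Poly_Mapping.keys a"
      by (auto simp: in_keys_iff lookup_minus)
    then show "Poly_Mapping.keys b \<subseteq> {..<n}" using f a(1) unfolding in_poly_ring_def by blast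
  qed
  moreover have "f = (\<Sum>j<n. g j * var j ^ d j)"
  proof -
    have g_times_power: "g j * var j ^ d j = (\<Sum>a\<in>K j. Poly_Mapping.single a (Poly_Mapping.lookup f a))" for j
      unfolding g_def sum_distrib_right K_def
      by (intro sum.cong refl single_diff_mult_var_power) (use J in blast)
    have "(\<Sum>j<n. g j * var j ^ d j) = (\<Sum>j<n. \<Sum>a\<in>K j. Poly_Mapping.single a (Poly_Mapping.lookup f a))"
      by (simp only: g_times_power)
    also have "\<dots> = (\<Sum>a\<in>Poly_Mapping.keys f. Poly_Mapping.single a (Poly_Mapping.lookup f a))"
      unfolding K_def by (rule sum.group) (auto simp: J)
    finally show ?thesis using poly_mapping_sum_single_lookup[of f] by simp
  qed
  ultimately show ?thesis unfolding in_mci_ideal_def by (intro exI[of _ g]) simp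
qed

lemma in_mci_ideal_iff_keys_not_standard:
  fixes f :: "'k::comm_ring_1 mpoly"
  assumes "in_poly_ring n f"
  shows "in_mci_ideal n d f \<longleftrightarrow> (\<forall>a\<in>Poly_Mapping.keys f. \<not> standard_monomial n d a)"
  using assms keys_mci_ideal_not_standard in_mci_ideal_if_keys_not_standard by blast

definition max_standard_key :: "nat \<Rightarrow> (nat \<Rightarrow> nat) \<Rightarrow> nat \<Rightarrow> 'k::zero mpoly \<Rightarrow> (nat \<Rightarrow>\<^sub>0 nat) \<Rightarrow> bool" where
  "max_standard_key n d p g a \<longleftrightarrow> a \<in> Poly_Mapping.keys g \<and> standard_monomial n d a \<and>
     (\<forall>b\<in>Poly_Mapping.keys g. standard_monomial n d b \<longrightarrow> Poly_Mapping.lookup b p \<le> Poly_Mapping.lookup a p)"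

lemma ex_max_standard_key:
  assumes "a \<in> Poly_Mapping.keys g" "standard_monomial n d a"
  obtains a' where "max_standard_key n d p g a'"
proof -
  define S where "S = {a\<in>Poly_Mapping.keys g. standard_monomial n d a}"
  have "finite S" "a \<in> S" using assms unfolding S_def by auto
  then obtain a' where "a' \<in> S" "\<forall>b\<in>S. Poly_Mapping.lookup b p \<le> Poly_Mapping.lookup a' p"
    using Max_in[of "(\<lambda>b. Poly_Mapping.lookup b p) ` S"] Max_ge[of "(\<lambda>b. Poly_Mapping.lookup b p) ` S"]
    by fastforce
  then show thesis using that unfolding max_standard_key_def S_def by blast
qed

lemma lookup_mult_sum_var_max_standard_key:
  fixes g :: "'k::comm_ring_1 mpoly"
  assumes p: "p < n" and a: "max_standard_key n d p g a"
    and c: "standard_monomial n d (a + Poly_Mapping.single p 1)"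
  shows "Poly_Mapping.lookup (g * (\<Sum>j<n. var j)) (a + Poly_Mapping.single p 1) = Poly_Mapping.lookup g a"
proof -
  let ?c = "a + Poly_Mapping.single p 1"
  have no_other_source: "Poly_Mapping.lookup (g * var j) ?c = 0" if "j \<noteq> p" for j
  proof (rule ccontr)
    assume "Poly_Mapping.lookup (g * var j) ?c \<noteq> 0"
    then obtain b where b: "b \<in> Poly_Mapping.keys g" "?c = b + Poly_Mapping.single j 1"
      using keys_mult_var by (metis in_keys_iff)
    then have "Poly_Mapping.lookup b p \<le> Poly_Mapping.lookup a p"
      using a c standard_monomial_add_singleD unfolding max_standard_key_def by metis
    moreover have "Poly_Mapping.lookup ?c p = Poly_Mapping.lookup b p"
      using b(2) that by (simp add: lookup_add lookup_single when_def)
    ultimately show False by (simp add: lookup_add)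
  qed
  have "Poly_Mapping.lookup (g * (\<Sum>j<n. var j)) ?c = (\<Sum>j<n. Poly_Mapping.lookup (g * var j) ?c)"
    by (simp add: sum_distrib_left lookup_sum)
  also have "\<dots> = Poly_Mapping.lookup (g * var p) ?c"
    using p no_other_source by (subst sum.remove[of _ p]) (auto intro: sum.neutral)
  also have "\<dots> = Poly_Mapping.lookup g a"
    unfolding var_def by (rule lookup_mult_single_one_add)
  finally show ?thesis .
qed

lemma max_standard_key_mult_sum_var:
  fixes g :: "'k::comm_ring_1 mpoly"
  assumes p: "p < n" and a: "max_standard_key n d p g a" and room: "Poly_Mapping.lookup a p + 1 < d p"
  shows "max_standard_key n d p (g * (\<Sum>j<n. var j)) (a + Poly_Mapping.single p 1)"
proof -
  let ?c = "a + Poly_Mapping.single p 1"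
  have c_standard: "standard_monomial n d ?c"
    using a room unfolding max_standard_key_def standard_monomial_def
    by (auto simp: lookup_add lookup_single when_def)
  have "?c \<in> Poly_Mapping.keys (g * (\<Sum>j<n. var j))"
    using lookup_mult_sum_var_max_standard_key[OF p a c_standard] a
    by (simp add: in_keys_iff max_standard_key_def)
  moreover have "Poly_Mapping.lookup b p \<le> Poly_Mapping.lookup ?c p"
    if b: "b \<in> Poly_Mapping.keys (g * (\<Sum>j<n. var j))" "standard_monomial n d b" for b
  proof -
    obtain j b' where "b' \<in> Poly_Mapping.keys g" "b = b' + Poly_Mapping.single j 1"
      using keys_mult_sum_var[OF b(1)] by metis
    moreover from this have "Poly_Mapping.lookup b' p \<le> Poly_Mapping.lookup a p"
      using a b(2) standard_monomial_add_singleD unfolding max_standard_key_def by metis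
    ultimately show ?thesis by (simp add: lookup_add lookup_single when_def)
  qed
  ultimately show ?thesis using c_standard unfolding max_standard_key_def by blast
qed

lemma max_standard_key_mult_power_sum_var:
  fixes f :: "'k::comm_ring_1 mpoly"
  assumes p: "p < n" and a: "max_standard_key n d p f a" and room: "Poly_Mapping.lookup a p + k < d p"
  shows "max_standard_key n d p (f * (\<Sum>j<n. var j) ^ k) (a + Poly_Mapping.single p k)"
  using room
proof (induction k)
  case (Suc k)
  have "max_standard_key n d p (f * (\<Sum>j<n. var j) ^ k * (\<Sum>j<n. var j))
      (a + Poly_Mapping.single p k + Poly_Mapping.single p 1)"
    using Suc by (intro max_standard_key_mult_sum_var p) (simp_all add: lookup_add)
  then show ?case by (simp add: ac_simps single_add[symmetric])
qed (use a in simp)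

theorem theorem2p5:
  fixes n m :: nat and d :: "nat \<Rightarrow> nat"
  assumes "n \<ge> 1"
    and "\<forall>j<n. d j > 0"
    and "2 * Max (d ` {..<n}) > (\<Sum>j<n. (d j - 1)) + m"
  shows "\<forall>i::nat. 2 * int i \<le> int (\<Sum>j<n. (d j - 1)) - int m \<longrightarrow>
          (\<forall>f :: 'k::field mpoly. in_poly_ring n f \<and> homogeneous i f \<longrightarrow>
             in_mci_ideal n d (f * (\<Sum>j<n. var j) ^ m) \<longrightarrow> in_mci_ideal n d f)"
proof (intro allI impI, elim conjE)
  fix i :: nat and f :: "'k mpoly"
  assume i: "2 * int i \<le> int (\<Sum>j<n. (d j - 1)) - int m"
    and f: "in_poly_ring n f" "homogeneous i f"
    and fm: "in_mci_ideal n d (f * (\<Sum>j<n. var j) ^ m)"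
  have "Max (d ` {..<n}) \<in> d ` {..<n}"
    using \<open>n \<ge> 1\<close> by (intro Max_in) (auto simp: lessThan_empty_iff)
  then obtain p where p: "p < n" "d p = Max (d ` {..<n})" by auto
  show "in_mci_ideal n d f"
  proof (rule ccontr)
    assume "\<not> in_mci_ideal n d f"
    then obtain a where a: "max_standard_key n d p f a"
      using in_mci_ideal_iff_keys_not_standard[OF f(1)] ex_max_standard_key by metis
    then have "Poly_Mapping.lookup a p \<le> i"
      using f(2) lookup_le_mdeg[of a p] unfolding homogeneous_def max_standard_key_def by auto
    moreover have "i + m < d p" using i assms(3) p(2) by linarith
    ultimately have "max_standard_key n d p (f * (\<Sum>j<n. var j) ^ m) (a + Poly_Mapping.single p m)"
      by (intro max_standard_key_mult_power_sum_var p(1) a) simp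
    then show False
      using keys_mci_ideal_not_standard[OF fm] unfolding max_standard_key_def by blast
  qed
qed

end
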